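(* Let $K\subseteq\mathbb{R}^n$ be a closed convex set of dimension at least $2$, let $O\in\partial K$, let $r>0$, and suppose the level set $L=S_r(O)\cap K$ contains no $O$-critical point. Then there exists a smooth vector field $V$ along $L$ whose radial component $\left\langle V(p),\frac{p-O}{|p-O|}\right\rangle$ is equal to the same positive constant at every $p\in L$, and which points toward the interior of $K$ at every point of $L$.
   Context: $S_r(O)$ denotes the Euclidean sphere of radius $r$ centered at $O$. A point $P\in\partial K\setminus\{O\}$ is called $O$-critical if $\langle O-P, X-P\rangle\geq 0$ for all $X\in K$ (equivalently, the affine hyperplane through $P$ orthogonal to the segment $OP$ is a supporting hyperplane of $K$). "Pointing toward the interior of $K$" at $p$ means that $p+tV(p)$ lies in the interior of $K$ for all sufficiently small $t>0$. *)

theory Defs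
  imports "HOL-Analysis.Analysis"
begin

fun C_k_on :: "nat \<Rightarrow> 'a::real_normed_vector set \<Rightarrow> ('a \<Rightarrow> 'b::real_normed_vector) \<Rightarrow> bool" where
  "C_k_on 0 U f = continuous_on U f"
| "C_k_on (Suc k) U f =
     ((\<forall>x\<in>U. f differentiable (at x)) \<and>
      (\<forall>v. C_k_on k U (\<lambda>x. frechet_derivative f (at x) v)))"

definition smooth_on :: "'a::real_normed_vector set \<Rightarrow> ('a \<Rightarrow> 'b::real_normed_vector) \<Rightarrow> bool" where
  "smooth_on U f \<longleftrightarrow> (\<forall>k. C_k_on k U f)"

definition smooth_along :: "'a::real_normed_vector set \<Rightarrow> ('a \<Rightarrow> 'b::real_normed_vector) \<Rightarrow> bool" where
  "smooth_along L V \<longleftrightarrow> (\<exists>U. open U \<and> L \<subseteq> U \<and> smooth_on U V)"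

definition O_critical :: "'a::euclidean_space set \<Rightarrow> 'a \<Rightarrow> 'a \<Rightarrow> bool" where
  "O_critical K Oc P \<longleftrightarrow> P \<in> rel_frontier K \<and> P \<noteq> Oc \<and> (\<forall>X\<in>K. inner (Oc - P) (X - P) \<ge> 0)"

definition points_inward :: "'a::euclidean_space set \<Rightarrow> 'a \<Rightarrow> 'a \<Rightarrow> bool" where
  "points_inward K p v \<longleftrightarrow> (\<exists>\<epsilon>>0. \<forall>t. 0 < t \<and> t < \<epsilon> \<longrightarrow> p + t *\<^sub>R v \<in> rel_interior K)"

end

theory Submission
  imports Defs
begin

text \<open>Call \<open>inner (x - p) (p - Oc)\<close> the height of \<open>x\<close> over \<open>p\<close>. Every point \<open>p\<close> of the
  level set is non-critical, so some relative interior point of \<open>K\<close> has positive height over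
  it; by compactness finitely many such points \<open>X\<close> and one \<open>\<delta> > 0\<close> suffice for the whole
  level set. The field \<open>\<Sum>x\<in>X. exp (M * height) *\<^sub>R (x - p)\<close> is smooth, points towards a
  convex combination of relative interior points, hence inward, and for large \<open>M\<close> the
  points of height above \<open>\<delta>\<close> dominate its radial component, which is therefore positive;
  dividing by it makes the radial component constant.\<close>

lemma C_k_on_cong:
  assumes "open U" and "C_k_on k U f" and "\<And>x. x \<in> U \<Longrightarrow> f x = g x"
  shows "C_k_on k U g"
  using assms(2,3)
proof (induction k arbitrary: f g)
  case 0
  then show ?case using continuous_on_cong by force
next
  case (Suc k)
  have g_deriv: "(g has_derivative frechet_derivative f (at x)) (at x)" if "x \<in> U" for x
  proof -
    have "(f has_derivative frechet_derivative f (at x)) (at x)"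
      using Suc.prems(1) that by (simp add: frechet_derivative_works)
    then show ?thesis
      using has_derivative_transform_within_open[OF _ assms(1) that] Suc.prems(2) by blast
  qed
  have "C_k_on k U (\<lambda>x. frechet_derivative g (at x) v)" for v
  proof (rule Suc.IH)
    show "C_k_on k U (\<lambda>x. frechet_derivative f (at x) v)"
      using Suc.prems(1) by simp
    show "frechet_derivative f (at x) v = frechet_derivative g (at x) v" if "x \<in> U" for x
      using frechet_derivative_at[OF g_deriv[OF that]] by simp
  qed
  moreover have "g differentiable (at x)" if "x \<in> U" for x
    using g_deriv[OF that] by (rule differentiableI)
  ultimately show ?case
    by (simp only: C_k_on.simps) blast
qed

lemma C_k_on_SucI:
  assumes "open U"
    and "\<And>x. x \<in> U \<Longrightarrow> (f has_derivative f' x) (at x)"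
    and "\<And>v. C_k_on k U (\<lambda>x. f' x v)"
  shows "C_k_on (Suc k) U f"
proof -
  have "C_k_on k U (\<lambda>x. frechet_derivative f (at x) v)" for v
  proof (rule C_k_on_cong[OF assms(1,3)])
    show "f' x v = frechet_derivative f (at x) v" if "x \<in> U" for x
      using frechet_derivative_at[OF assms(2)[OF that]] by simp
  qed
  moreover have "f differentiable (at x)" if "x \<in> U" for x
    using assms(2)[OF that] by (rule differentiableI)
  ultimately show ?thesis
    by (simp only: C_k_on.simps) blast
qed

lemma C_k_on_Suc_has_derivative:
  "C_k_on (Suc k) U f \<Longrightarrow> x \<in> U \<Longrightarrow> (f has_derivative frechet_derivative f (at x)) (at x)"
  by (simp add: frechet_derivative_works)

lemma C_k_on_SucD: "C_k_on (Suc k) U f \<Longrightarrow> C_k_on k U f"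
proof (induction k arbitrary: f)
  case 0
  then show ?case
    by (simp add: continuous_at_imp_continuous_on differentiable_imp_continuous_within)
next
  case (Suc k)
  then show ?case by (metis C_k_on.simps(2))
qed

lemma C_k_on_subset: "C_k_on k V f \<Longrightarrow> U \<subseteq> V \<Longrightarrow> C_k_on k U f"
proof (induction k arbitrary: f)
  case 0
  then show ?case by (simp add: continuous_on_subset)
next
  case (Suc k)
  then show ?case by (simp add: subset_iff)
qed

lemma C_k_on_const: "C_k_on k U (\<lambda>x. c)"
  by (induction k arbitrary: c) auto

lemma C_k_on_id: "C_k_on k U (\<lambda>x. x)"
  by (cases k) (auto simp: C_k_on_const)

lemma C_k_on_add:
  assumes "open U"
  shows "C_k_on k U f \<Longrightarrow> C_k_on k U g \<Longrightarrow> C_k_on k U (\<lambda>x. f x + g x)"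
proof (induction k arbitrary: f g)
  case 0
  then show ?case by (simp add: continuous_on_add)
next
  case (Suc k)
  show ?case
  proof (rule C_k_on_SucI[OF assms has_derivative_add])
    fix x assume "x \<in> U"
    then show "(f has_derivative frechet_derivative f (at x)) (at x)"
      and "(g has_derivative frechet_derivative g (at x)) (at x)"
      using Suc.prems by (simp_all add: C_k_on_Suc_has_derivative)
  next
    fix v
    show "C_k_on k U (\<lambda>x. frechet_derivative f (at x) v + frechet_derivative g (at x) v)"
      using Suc.prems by (intro Suc.IH) simp_all
  qed
qed

lemma C_k_on_bilinear:
  fixes prod :: "'b::real_normed_vector \<Rightarrow> 'c::real_normed_vector \<Rightarrow> 'd::real_normed_vector"
  assumes "bounded_bilinear prod" and "open U"
  shows "C_k_on k U f \<Longrightarrow> C_k_on k U g \<Longrightarrow> C_k_on k U (\<lambda>x. prod (f x) (g x))"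
proof (induction k arbitrary: f g)
  case 0
  then show ?case using bounded_bilinear.continuous_on[OF assms(1)] by simp
next
  case (Suc k)
  show ?case
  proof (rule C_k_on_SucI[OF assms(2) bounded_bilinear.FDERIV[OF assms(1)]])
    fix x assume "x \<in> U"
    then show "(f has_derivative frechet_derivative f (at x)) (at x)"
      and "(g has_derivative frechet_derivative g (at x)) (at x)"
      using Suc.prems by (simp_all add: C_k_on_Suc_has_derivative)
  next
    fix v
    have "C_k_on k U f" "C_k_on k U g"
      using Suc.prems by (simp_all add: C_k_on_SucD)
    then show "C_k_on k U (\<lambda>x. prod (f x) (frechet_derivative g (at x) v)
        + prod (frechet_derivative f (at x) v) (g x))"
      using Suc.prems by (intro C_k_on_add[OF assms(2)] Suc.IH) simp_all
  qed
qed

lemma C_k_on_diff: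
  assumes "open U" "C_k_on k U f" "C_k_on k U g"
  shows "C_k_on k U (\<lambda>x. f x - g x)"
  using C_k_on_add[OF assms(1,2) C_k_on_bilinear[OF bounded_bilinear_scaleR assms(1) C_k_on_const assms(3)],
      of "-1"]
  by simp

lemma C_k_on_sum:
  assumes "open U" and "finite S" and "\<And>i. i \<in> S \<Longrightarrow> C_k_on k U (F i)"
  shows "C_k_on k U (\<lambda>x. \<Sum>i\<in>S. F i x)"
  using assms(2,3)
  by (induction S rule: finite_induct) (auto simp: C_k_on_const intro!: C_k_on_add[OF assms(1)])

lemma C_k_on_compose_real:
  fixes f :: "'a::real_normed_vector \<Rightarrow> real"
  assumes "open U"
    and hs: "\<And>j y. y \<in> T \<Longrightarrow> (hs j has_real_derivative hs (Suc j) y) (at y)"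
    and fT: "\<And>x. x \<in> U \<Longrightarrow> f x \<in> T"
  shows "C_k_on k U f \<Longrightarrow> C_k_on k U (\<lambda>x. hs j (f x))"
proof (induction k arbitrary: j)
  case 0
  have "continuous_on T (hs j)"
    using hs by (meson DERIV_isCont continuous_at_imp_continuous_on)
  then show ?case
    using 0 fT by (auto intro: continuous_on_compose2[of T "hs j" U f])
next
  case (Suc k)
  show ?case
  proof (rule C_k_on_SucI[OF assms(1)])
    fix x assume x: "x \<in> U"
    have "(hs j has_derivative (\<lambda>h. hs (Suc j) (f x) * h)) (at (f x))"
      using hs[OF fT[OF x]] by (simp add: has_field_derivative_def)
    with C_k_on_Suc_has_derivative[OF Suc.prems x]
    show "((\<lambda>x. hs j (f x)) has_derivative
        (\<lambda>v. hs (Suc j) (f x) * frechet_derivative f (at x) v)) (at x)"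
      by (rule has_derivative_compose)
  next
    fix v
    show "C_k_on k U (\<lambda>x. hs (Suc j) (f x) * frechet_derivative f (at x) v)"
      using Suc.prems C_k_on_SucD[OF Suc.prems]
      by (intro C_k_on_bilinear[OF bounded_bilinear_mult assms(1)] Suc.IH) simp_all
  qed
qed

lemma C_k_on_exp:
  assumes "open U" and "C_k_on k U f"
  shows "C_k_on k U (\<lambda>x. exp (f x :: real))"
  using C_k_on_compose_real[OF assms(1), of UNIV "\<lambda>j. exp" f k 0] assms(2)
  by (auto intro: DERIV_exp)

lemma has_real_derivative_inverse_power:
  fixes y :: real
  assumes "y \<noteq> 0"
  shows "((\<lambda>y. (-1)^j * fact j * inverse y ^ Suc j) has_real_derivative
    (-1)^Suc j * fact (Suc j) * inverse y ^ Suc (Suc j)) (at y)"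
proof -
  have "((\<lambda>y. (-1)^j * fact j * inverse y ^ Suc j) has_real_derivative
      (-1)^j * fact j * (of_nat (Suc j) * inverse y ^ j * (- (inverse y * inverse y)))) (at y)"
    by (intro DERIV_cmult DERIV_cong[OF DERIV_power[OF DERIV_inverse[OF assms]]])
      (simp add: power2_eq_square)
  then show ?thesis
    by (simp add: algebra_simps)
qed

lemma C_k_on_inverse:
  assumes "open U" and "C_k_on k U f" and "\<And>x. x \<in> U \<Longrightarrow> f x > 0"
  shows "C_k_on k U (\<lambda>x. inverse (f x :: real))"
  using C_k_on_compose_real[OF assms(1), of "{0<..}" "\<lambda>j y. (-1)^j * fact j * inverse y ^ Suc j" f k 0]
    assms(2,3) has_real_derivative_inverse_power by auto

lemma points_inward_scaleR:
  assumes "points_inward K p v" and "0 < c"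
  shows "points_inward K p (c *\<^sub>R v)"
proof -
  obtain \<epsilon> where "0 < \<epsilon>" and \<epsilon>: "\<And>t. 0 < t \<Longrightarrow> t < \<epsilon> \<Longrightarrow> p + t *\<^sub>R v \<in> rel_interior K"
    using assms(1) by (auto simp: points_inward_def)
  have "p + t *\<^sub>R (c *\<^sub>R v) \<in> rel_interior K" if "0 < t" "t < \<epsilon> / c" for t
    using \<epsilon>[of "t * c"] that assms(2) by (simp add: field_simps)
  then show ?thesis
    using \<open>0 < \<epsilon>\<close> assms(2) unfolding points_inward_def by (intro exI[of _ "\<epsilon> / c"]) auto
qed

lemma points_inward_add:
  assumes "convex K" and "points_inward K p v" and "points_inward K p w"
  shows "points_inward K p (v + w)"
proof -
  obtain \<epsilon>\<^sub>v where "0 < \<epsilon>\<^sub>v" and \<epsilon>\<^sub>v: "\<And>t. 0 < t \<Longrightarrow> t < \<epsilon>\<^sub>v \<Longrightarrow> p + t *\<^sub>R v \<in> rel_interior K"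
    using assms(2) by (auto simp: points_inward_def)
  obtain \<epsilon>\<^sub>w where "0 < \<epsilon>\<^sub>w" and \<epsilon>\<^sub>w: "\<And>t. 0 < t \<Longrightarrow> t < \<epsilon>\<^sub>w \<Longrightarrow> p + t *\<^sub>R w \<in> rel_interior K"
    using assms(3) by (auto simp: points_inward_def)
  have "p + t *\<^sub>R (v + w) \<in> rel_interior K" if "0 < t" "t < min \<epsilon>\<^sub>v \<epsilon>\<^sub>w / 2" for t
  proof -
    have "p + t *\<^sub>R (v + w) = (1/2) *\<^sub>R (p + (2 * t) *\<^sub>R v) + (1/2) *\<^sub>R (p + (2 * t) *\<^sub>R w)"
      by (simp add: scaleR_add_right flip: scaleR_add_left)
    also have "\<dots> \<in> rel_interior K"
      using \<epsilon>\<^sub>v[of "2 * t"] \<epsilon>\<^sub>w[of "2 * t"] that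
      by (intro convexD[OF convex_rel_interior[OF assms(1)]]) auto
    finally show ?thesis .
  qed
  then show ?thesis
    using \<open>0 < \<epsilon>\<^sub>v\<close> \<open>0 < \<epsilon>\<^sub>w\<close> unfolding points_inward_def
    by (intro exI[of _ "min \<epsilon>\<^sub>v \<epsilon>\<^sub>w / 2"]) auto
qed

lemma points_inward_sum:
  assumes "convex K" and "finite X" and "X \<noteq> {}" and "\<And>x. x \<in> X \<Longrightarrow> points_inward K p (f x)"
  shows "points_inward K p (\<Sum>x\<in>X. f x)"
  using assms(2-4)
  by (induction X rule: finite_ne_induct) (auto intro: points_inward_add[OF assms(1)])

lemma points_inward_toward_rel_interior:
  assumes "convex K" and "p \<in> closure K" and "x \<in> rel_interior K"
  shows "points_inward K p (x - p)"
  unfolding points_inward_def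
proof (intro exI[of _ 1] conjI allI impI)
  fix t :: real assume "0 < t \<and> t < 1"
  then have "p - t *\<^sub>R (p - x) \<in> rel_interior K"
    using assms by (intro rel_interior_closure_convex_shrink) auto
  then show "p + t *\<^sub>R (x - p) \<in> rel_interior K"
    by (simp add: algebra_simps)
qed simp

lemma noncritical_imp_rel_interior_beyond:
  fixes K :: "'a::euclidean_space set"
  assumes "convex K" and "Oc \<in> K" and "p \<in> K" and "p \<noteq> Oc" and "\<not> O_critical K Oc p"
  shows "\<exists>x\<in>rel_interior K. 0 < inner (x - p) (p - Oc)"
proof -
  have "\<exists>y\<in>K. 0 < inner (y - p) (p - Oc)"
  proof (cases "p \<in> rel_interior K")
    case True
    obtain e where "1 < e" and e: "(1 - e) *\<^sub>R Oc + e *\<^sub>R p \<in> K"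
      using convex_rel_interior_if2[OF assms(1) True] hull_inc[OF assms(2)] by blast
    have "((1 - e) *\<^sub>R Oc + e *\<^sub>R p) - p = (e - 1) *\<^sub>R (p - Oc)"
      by (simp add: algebra_simps)
    then have "inner (((1 - e) *\<^sub>R Oc + e *\<^sub>R p) - p) (p - Oc) = (e - 1) * (norm (p - Oc))\<^sup>2"
      by (simp add: power2_norm_eq_inner)
    also have "\<dots> > 0"
      using \<open>1 < e\<close> assms(4) by simp
    finally show ?thesis
      using e by blast
  next
    case False
    then have "p \<in> rel_frontier K"
      using assms(3) closure_subset by (auto simp: rel_frontier_def)
    then obtain y where "y \<in> K" and "inner (Oc - p) (y - p) < 0"
      using assms(4,5) unfolding O_critical_def by force
    moreover have "inner (y - p) (p - Oc) = - inner (Oc - p) (y - p)"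
      by (simp add: inner_commute inner_diff_right)
    ultimately show ?thesis
      by (metis neg_0_less_iff_less)
  qed
  \<comment> \<open>the relative interior is dense in \<open>K\<close> and the half-space of positive height is open\<close>
  then obtain y where "y \<in> K" and "y \<in> {z. 0 < inner (z - p) (p - Oc)}"
    by blast
  moreover have "open {z. 0 < inner (z - p) (p - Oc)}"
    by (intro open_Collect_less continuous_intros)
  moreover have "y \<in> closure (rel_interior K)"
    using \<open>y \<in> K\<close> closure_subset convex_closure_rel_interior[OF assms(1)] by blast
  ultimately have "{z. 0 < inner (z - p) (p - Oc)} \<inter> rel_interior K \<noteq> {}"
    using open_Int_closure_eq_empty by blast
  then show ?thesis
    by blast
qed

lemma compact_uniform_positive_cover:
  fixes g :: "'i \<Rightarrow> 'a::topological_space \<Rightarrow> real"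
  assumes "compact L" and "\<And>i. i \<in> I \<Longrightarrow> continuous_on UNIV (g i)"
    and "\<forall>p\<in>L. \<exists>i\<in>I. 0 < g i p"
  shows "\<exists>X \<delta>. finite X \<and> X \<subseteq> I \<and> 0 < \<delta> \<and> (\<forall>p\<in>L. \<exists>i\<in>X. \<delta> < g i p)"
proof -
  obtain D where D: "D \<subseteq> I \<times> {0<..}" "finite D" "L \<subseteq> (\<Union>(i, d)\<in>D. {p. d < g i p})"
  proof (rule compactE_image[OF assms(1), of "I \<times> {0<..}" "\<lambda>(i, d). {p. d < g i p}"])
    show "open ((\<lambda>(i, d). {p. d < g i p}) c)" if "c \<in> I \<times> {0<..}" for c
      using that assms(2) by (auto intro!: open_Collect_less continuous_on_const)
    show "L \<subseteq> (\<Union>c\<in>I \<times> {0<..}. (\<lambda>(i, d). {p. d < g i p}) c)"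
    proof
      fix p assume "p \<in> L"
      then obtain i where "i \<in> I" "0 < g i p"
        using assms(3) by blast
      then show "p \<in> (\<Union>c\<in>I \<times> {0<..}. (\<lambda>(i, d). {p. d < g i p}) c)"
        by (intro UN_I[of "(i, g i p / 2)"]) auto
    qed
  qed
  define \<delta> where "\<delta> = Min (insert 1 (snd ` D))"
  have "0 < \<delta>"
    using D(1,2) by (auto simp: \<delta>_def)
  moreover have "\<exists>i\<in>fst ` D. \<delta> < g i p" if p: "p \<in> L" for p
  proof -
    obtain i d where "(i, d) \<in> D" and "d < g i p"
      using D(3) p by blast
    moreover have "\<delta> \<le> d"
      using \<open>(i, d) \<in> D\<close> D(2) unfolding \<delta>_def by (intro Min_le) force+
    ultimately show ?thesis
      by force
  qed
  ultimately show ?thesis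
    using D(1,2) by (intro exI[of _ "fst ` D"] exI[of _ \<delta>]) auto
qed

lemma exp_weighted_sum_pos:
  fixes a :: "'i \<Rightarrow> real"
  assumes "finite X" and "i\<^sub>0 \<in> X" and "0 < \<delta>" and "\<delta> < a i\<^sub>0"
    and "\<And>i. i \<in> X \<Longrightarrow> - B \<le> a i" and "0 \<le> B" and "real (card X) * B \<le> M * \<delta>\<^sup>2"
  shows "0 < (\<Sum>i\<in>X. exp (M * a i) * a i)"
proof -
  have "0 \<le> M * \<delta>\<^sup>2"
    using assms(6,7) by (meson mult_nonneg_nonneg of_nat_0_le_iff order.trans)
  then have "0 \<le> M"
    using assms(3) by (simp add: zero_le_mult_iff)
  have "real (card X) * B < (1 + M * \<delta>) * \<delta>"
    using assms(3,7) by (simp add: power2_eq_square algebra_simps)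
  also have "\<dots> \<le> exp (M * \<delta>) * \<delta>"
    using assms(3) exp_ge_add_one_self[of "M * \<delta>"] by (intro mult_right_mono) auto
  also have "\<dots> \<le> exp (M * a i\<^sub>0) * a i\<^sub>0"
    using assms(3,4) \<open>0 \<le> M\<close> by (intro mult_mono) (auto intro: mult_left_mono)
  finally have dominant: "real (card X) * B < exp (M * a i\<^sub>0) * a i\<^sub>0" .
  have bounded_below: "- B \<le> exp (M * a i) * a i" if "i \<in> X" for i
  proof (cases "0 \<le> a i")
    case True
    then show ?thesis
      using assms(6) by (smt (verit) exp_gt_zero mult_nonneg_nonneg)
  next
    case False
    then have "exp (M * a i) \<le> 1"
      using \<open>0 \<le> M\<close> by (simp add: mult_nonneg_nonpos)
    then have "a i \<le> exp (M * a i) * a i"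
      using False by (smt (verit) mult_right_mono_neg mult_cancel_right1)
    then show ?thesis
      using assms(5)[OF that] by linarith
  qed
  have "- (real (card X) * B) \<le> - (real (card (X - {i\<^sub>0})) * B)"
    using assms(1,6) by (simp add: card_Diff1_le mult_right_mono)
  also have "\<dots> \<le> (\<Sum>i\<in>X - {i\<^sub>0}. exp (M * a i) * a i)"
    using sum_mono[of "X - {i\<^sub>0}" "\<lambda>_. - B"] bounded_below by auto
  finally show ?thesis
    using dominant assms(1,2) by (simp add: sum.remove)
qed

lemma exp_weighted_sum_pos_uniform:
  fixes g :: "'i \<Rightarrow> 'a::topological_space \<Rightarrow> real"
  assumes "compact L" and "finite X" and "\<And>i. i \<in> X \<Longrightarrow> continuous_on L (g i)"
    and "0 < \<delta>" and "\<forall>p\<in>L. \<exists>i\<in>X. \<delta> < g i p"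
  shows "\<exists>M. \<forall>p\<in>L. 0 < (\<Sum>i\<in>X. exp (M * g i p) * g i p)"
proof -
  have "compact (\<Union>i\<in>X. g i ` L)"
    using assms(1-3) by (intro compact_UN compact_continuous_image) auto
  then obtain B where "\<forall>y\<in>(\<Union>i\<in>X. g i ` L). \<bar>y\<bar> \<le> B"
    using compact_imp_bounded bounded_real by blast
  then have B: "\<bar>g i p\<bar> \<le> B" if "i \<in> X" "p \<in> L" for i p
    using that by blast
  define M where "M = real (card X) * \<bar>B\<bar> / \<delta>\<^sup>2"
  have "0 < (\<Sum>i\<in>X. exp (M * g i p) * g i p)" if p: "p \<in> L" for p
  proof -
    obtain i\<^sub>0 where "i\<^sub>0 \<in> X" "\<delta> < g i\<^sub>0 p"
      using assms(5) p by blast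
    moreover have "- \<bar>B\<bar> \<le> g i p" if "i \<in> X" for i
      using B[OF that \<open>p \<in> L\<close>] by linarith
    ultimately show ?thesis
      using assms(2,4) by (intro exp_weighted_sum_pos[where \<delta> = \<delta> and B = "\<bar>B\<bar>"]) (auto simp: M_def)
  qed
  then show ?thesis
    by blast
qed

definition exp_weighted_field :: "real \<Rightarrow> 'a set \<Rightarrow> 'a \<Rightarrow> 'a \<Rightarrow> 'a::real_inner" where
  "exp_weighted_field M X Oc p = (\<Sum>x\<in>X. exp (M * inner (x - p) (p - Oc)) *\<^sub>R (x - p))"

lemma C_k_on_exp_weighted_field:
  assumes "finite X" and "open U"
  shows "C_k_on k U (exp_weighted_field M X Oc)"
proof -
  have height: "C_k_on k U (\<lambda>p. inner (x - p) (p - Oc))" for x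
    by (intro C_k_on_bilinear[OF bounded_bilinear_inner assms(2)] C_k_on_diff[OF assms(2)]
        C_k_on_const C_k_on_id)
  show ?thesis
    unfolding exp_weighted_field_def[abs_def]
    by (intro C_k_on_sum[OF assms(2,1)] C_k_on_bilinear[OF bounded_bilinear_scaleR assms(2)]
        C_k_on_exp[OF assms(2)] C_k_on_bilinear[OF bounded_bilinear_mult assms(2)]
        C_k_on_diff[OF assms(2)] C_k_on_const C_k_on_id height)
qed

lemma inner_exp_weighted_field:
  "inner (exp_weighted_field M X Oc p) (p - Oc)
    = (\<Sum>x\<in>X. exp (M * inner (x - p) (p - Oc)) * inner (x - p) (p - Oc))"
  by (simp add: exp_weighted_field_def inner_sum_left)

lemma exp_weighted_field_points_inward:
  assumes "convex K" and "finite X" and "X \<noteq> {}" and "X \<subseteq> rel_interior K" and "p \<in> closure K"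
  shows "points_inward K p (exp_weighted_field M X Oc p)"
  unfolding exp_weighted_field_def
  using assms
  by (intro points_inward_sum points_inward_scaleR points_inward_toward_rel_interior) auto

lemma smooth_along_normalised_field:
  fixes W :: "'a::real_inner \<Rightarrow> 'a"
  assumes "\<And>k. C_k_on k UNIV W" and "\<And>p. p \<in> L \<Longrightarrow> 0 < inner (W p) (p - Oc)"
  shows "smooth_along L (\<lambda>p. inverse (inner (W p) (p - Oc)) *\<^sub>R W p)"
proof -
  define U where "U = {p. 0 < inner (W p) (p - Oc)}"
  have radial: "C_k_on k UNIV (\<lambda>p. inner (W p) (p - Oc))" for k
    by (intro C_k_on_bilinear[OF bounded_bilinear_inner] C_k_on_diff assms(1) C_k_on_const C_k_on_id)
      simp_all
  have "open U"
    using radial[of 0] unfolding U_def by (intro open_Collect_less continuous_on_const) simp_all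
  moreover have "C_k_on k U (\<lambda>p. inverse (inner (W p) (p - Oc)) *\<^sub>R W p)" for k
    using \<open>open U\<close> C_k_on_subset[OF radial] C_k_on_subset[OF assms(1)]
    by (intro C_k_on_bilinear[OF bounded_bilinear_scaleR] C_k_on_inverse) (auto simp: U_def)
  moreover have "L \<subseteq> U"
    using assms(2) by (auto simp: U_def)
  ultimately show ?thesis
    unfolding smooth_along_def smooth_on_def by blast
qed

theorem mainTheorem4:
  fixes K :: "'a::euclidean_space set" and Oc :: 'a and r :: real
  assumes "closed K" and "convex K" and "aff_dim K \<ge> 2"
    and "Oc \<in> rel_frontier K" and "r > 0"
    and "\<forall>P\<in>sphere Oc r \<inter> K. \<not> O_critical K Oc P"
  shows "\<exists>V :: 'a \<Rightarrow> 'a. smooth_along (sphere Oc r \<inter> K) V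
           \<and> (\<exists>c>0. \<forall>p\<in>sphere Oc r \<inter> K. inner (V p) ((1 / norm (p - Oc)) *\<^sub>R (p - Oc)) = c)
           \<and> (\<forall>p\<in>sphere Oc r \<inter> K. points_inward K p (V p))"
proof -
  let ?L = "sphere Oc r \<inter> K"
  have "Oc \<in> K"
    using assms(1,4) by (simp add: rel_frontier_def closure_closed)
  then have beyond: "\<forall>p\<in>?L. \<exists>x\<in>rel_interior K. 0 < inner (x - p) (p - Oc)"
    using assms(2,5,6) by (auto intro!: noncritical_imp_rel_interior_beyond)
  have "compact ?L"
    using assms(1) by (simp add: compact_Int_closed)
  have height_continuous: "continuous_on S (\<lambda>p. inner (x - p) (p - Oc))" for S x
    by (intro continuous_intros)
  obtain X \<delta> where X: "finite X" "X \<subseteq> rel_interior K" and "0 < \<delta>"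
    and cover: "\<forall>p\<in>?L. \<exists>x\<in>X. \<delta> < inner (x - p) (p - Oc)"
    using compact_uniform_positive_cover[OF \<open>compact ?L\<close> height_continuous beyond] by blast
  then obtain M where "\<forall>p\<in>?L. 0 < (\<Sum>x\<in>X. exp (M * inner (x - p) (p - Oc)) * inner (x - p) (p - Oc))"
    using exp_weighted_sum_pos_uniform[OF \<open>compact ?L\<close> X(1) height_continuous \<open>0 < \<delta>\<close> cover]
    by blast
  then have radial_pos: "0 < inner (exp_weighted_field M X Oc p) (p - Oc)" if "p \<in> ?L" for p
    using that by (simp add: inner_exp_weighted_field)
  define V where
    "V p = inverse (inner (exp_weighted_field M X Oc p) (p - Oc)) *\<^sub>R exp_weighted_field M X Oc p" for p
  have "smooth_along ?L V"
    unfolding V_def using radial_pos X(1)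
    by (intro smooth_along_normalised_field C_k_on_exp_weighted_field) auto
  moreover have "inner (V p) ((1 / norm (p - Oc)) *\<^sub>R (p - Oc)) = 1 / r" if "p \<in> ?L" for p
    using that radial_pos[OF that] by (simp add: V_def dist_norm norm_minus_commute)
  moreover have "points_inward K p (V p)" if "p \<in> ?L" for p
    unfolding V_def using that radial_pos[OF that] X cover assms(2)
    by (intro points_inward_scaleR exp_weighted_field_points_inward)
      (auto intro: closure_subset [THEN subsetD])
  ultimately show ?thesis
    using assms(5) by (intro exI[of _ V] conjI exI[of _ "1 / r"]) auto
qed

end
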